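(* Let $\Gamma_1=(V_1,W_1,E_1)$ and $\Gamma_2=(V_2,W_2,E_2)$ be bipartite graphs, and let $\mathcal{E}_1\subseteq V_1\times W_1\times\mathcal{S}$ and $\mathcal{E}_2\subseteq V_2\times W_2\times\mathcal{S}$ be strong edge colorings of $\Gamma_1$ and $\Gamma_2$ respectively, with colors from the same set $\mathcal{S}$. Define $V=W_1$, $W=\{(x,u)\in V_1\times V_2 : (x,y,s)\in\mathcal{E}_1 \text{ and } (u,v,s)\in\mathcal{E}_2 \text{ for some } y\in W_1, v\in W_2, s\in\mathcal{S}\}$, $E=\{(y,(x,u))\in V\times W : (x,y,s)\in\mathcal{E}_1 \text{ and } (u,v,s)\in\mathcal{E}_2 \text{ for some } s\in\mathcal{S}, v\in W_2\}$. Then $\Gamma=(V,W,E)$ is bipartite and $$\mathcal{E}=\{(y,(x,u),(s,v)) : (x,y,s)\in\mathcal{E}_1 \text{ and } (u,v,s)\in\mathcal{E}_2\}$$ is a strong edge coloring of $\Gamma$ with colors from $\Sigma=\{(s,v)\in\mathcal{S}\times W_2 : (u,v,s)\in\mathcal{E}_2 \text{ for some } u\in V_2\}$.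
   Context: A bipartite graph is written $(V_1,W_1,E)$ with $V_1\cap W_1=\emptyset$ and $E\subseteq V_1\times W_1$. An edge coloring of it with colors from $\mathcal{S}$ is written as a triple system $\{(v,w,s)\}$ in which each edge $(v,w)\in E$ occurs with exactly one color $s$, each color of $\mathcal{S}$ is used, and two edges sharing a vertex get different colors. It is a strong edge coloring if moreover no two distinct edges of the same color are both adjacent to (share a vertex with) a common edge; equivalently, if $(v,w,s),(v',w',s)$ are distinct colored edges then $v\ne v'$, $w\neq w'$, and neither $(v,w')$ nor $(v',w)$ is an edge. *)

theory Defs
  imports Main
begin

text \<open>A bipartite graph (V, W, E): the two vertex classes live in (possibly different)
  types, so they are disjoint by construction (disjoint union); edges go from V to W.\<close>
definition bipartite :: "'a set \<Rightarrow> 'b set \<Rightarrow> ('a \<times> 'b) set \<Rightarrow> bool" where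
  "bipartite V W E \<longleftrightarrow> E \<subseteq> V \<times> W"

definition edge_coloring ::
  "'a set \<Rightarrow> 'b set \<Rightarrow> ('a \<times> 'b) set \<Rightarrow> 'c set \<Rightarrow> ('a \<times> 'b \<times> 'c) set \<Rightarrow> bool" where
  "edge_coloring V W E S C \<longleftrightarrow>
     (\<forall>v w s. (v, w, s) \<in> C \<longrightarrow> (v, w) \<in> E \<and> s \<in> S) \<and>
     (\<forall>v w. (v, w) \<in> E \<longrightarrow> (\<exists>!s. (v, w, s) \<in> C)) \<and>
     (\<forall>s \<in> S. \<exists>v w. (v, w, s) \<in> C) \<and>
     (\<forall>v w s v' w' s'. (v, w, s) \<in> C \<and> (v', w', s') \<in> C \<and> (v, w) \<noteq> (v', w')
        \<and> (v = v' \<or> w = w') \<longrightarrow> s \<noteq> s')"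

definition strong_edge_coloring ::
  "'a set \<Rightarrow> 'b set \<Rightarrow> ('a \<times> 'b) set \<Rightarrow> 'c set \<Rightarrow> ('a \<times> 'b \<times> 'c) set \<Rightarrow> bool" where
  "strong_edge_coloring V W E S C \<longleftrightarrow>
     edge_coloring V W E S C \<and>
     (\<forall>v w v' w' s. (v, w, s) \<in> C \<and> (v', w', s) \<in> C \<and> (v, w) \<noteq> (v', w') \<longrightarrow>
        v \<noteq> v' \<and> w \<noteq> w' \<and> (v, w') \<notin> E \<and> (v', w) \<notin> E)"

end

theory Submission
  imports Defs
begin

text \<open>A colour (s, v) of the product picks out the edges (y, (x, u)) with (x, y) of colour s
  in the first graph and u the unique partner of v in colour class s of the second graph. So each
  product colour class is a relabelled copy of a colour class of the first coloring, and an
  induced matching there stays an induced matching in the product.\<close>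

definition edges_of :: "('a \<times> 'b \<times> 'c) set \<Rightarrow> ('a \<times> 'b) set" where
  "edges_of C = {(v, w). \<exists>s. (v, w, s) \<in> C}"

definition colors_of :: "('a \<times> 'b \<times> 'c) set \<Rightarrow> 'c set" where
  "colors_of C = {s. \<exists>v w. (v, w, s) \<in> C}"

definition color_product ::
  "('a \<times> 'b \<times> 'c) set \<Rightarrow> ('d \<times> 'e \<times> 'c) set \<Rightarrow> ('b \<times> ('a \<times> 'd) \<times> ('c \<times> 'e)) set" where
  "color_product C1 C2 = {(y, (x, u), (s, v)). (x, y, s) \<in> C1 \<and> (u, v, s) \<in> C2}"

lemma strong_edge_coloring_edges_ofI:
  assumes functional: "\<And>v w s s'. (v, w, s) \<in> C \<Longrightarrow> (v, w, s') \<in> C \<Longrightarrow> s = s'"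
    and induced: "\<And>v w v' w' s s'. (v, w, s) \<in> C \<Longrightarrow> (v', w', s) \<in> C \<Longrightarrow> (v, w) \<noteq> (v', w') \<Longrightarrow>
        v \<noteq> v' \<and> w \<noteq> w' \<and> (v, w', s') \<notin> C \<and> (v', w, s') \<notin> C"
  shows "strong_edge_coloring V W (edges_of C) (colors_of C) C"
proof -
  have "\<forall>v w. (v, w) \<in> edges_of C \<longrightarrow> (\<exists>!s. (v, w, s) \<in> C)"
    unfolding edges_of_def using functional by auto
  moreover have "\<forall>v w s v' w' s'. (v, w, s) \<in> C \<and> (v', w', s') \<in> C \<and> (v, w) \<noteq> (v', w')
      \<and> (v = v' \<or> w = w') \<longrightarrow> s \<noteq> s'"
    using induced by metis
  moreover have "\<forall>v w v' w' s. (v, w, s) \<in> C \<and> (v', w', s) \<in> C \<and> (v, w) \<noteq> (v', w') \<longrightarrow>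
      v \<noteq> v' \<and> w \<noteq> w' \<and> (v, w') \<notin> edges_of C \<and> (v', w) \<notin> edges_of C"
    unfolding edges_of_def using induced by blast
  ultimately show ?thesis
    unfolding strong_edge_coloring_def edge_coloring_def edges_of_def colors_of_def by blast
qed

lemma edge_coloring_mem:
  assumes "bipartite V W E" and "edge_coloring V W E S C" and "(v, w, s) \<in> C"
  shows "v \<in> V" "w \<in> W" "s \<in> S"
  using assms unfolding bipartite_def edge_coloring_def by blast+

lemma edge_coloring_color_unique:
  assumes "edge_coloring V W E S C" and "(v, w, s) \<in> C" and "(v, w, s') \<in> C"
  shows "s = s'"
  using assms unfolding edge_coloring_def by blast

lemma edge_coloring_color_class_matching:
  assumes "edge_coloring V W E S C"
  shows "(v, w, s) \<in> C \<Longrightarrow> (v, w', s) \<in> C \<Longrightarrow> w = w'"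
    and "(v, w, s) \<in> C \<Longrightarrow> (v', w, s) \<in> C \<Longrightarrow> v = v'"
  using assms unfolding edge_coloring_def by blast+

lemma edge_coloring_color_used:
  assumes "edge_coloring V W E S C" and "s \<in> S"
  shows "\<exists>v w. (v, w, s) \<in> C"
  using assms unfolding edge_coloring_def by blast

lemma strong_edge_coloring_color_product:
  assumes strong1: "strong_edge_coloring V1 W1 E1 S C1" and col2: "edge_coloring V2 W2 E2 S C2"
  shows "strong_edge_coloring V W (edges_of (color_product C1 C2))
           (colors_of (color_product C1 C2)) (color_product C1 C2)"
proof -
  have col1: "edge_coloring V1 W1 E1 S C1"
    using strong1 unfolding strong_edge_coloring_def by blast
  have in_E1: "(x, y) \<in> E1" if "(x, y, s) \<in> C1" for x y s
    using that col1 unfolding edge_coloring_def by blast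
  show ?thesis
  proof (rule strong_edge_coloring_edges_ofI)
    fix y w c c'
    assume "(y, w, c) \<in> color_product C1 C2" "(y, w, c') \<in> color_product C1 C2"
    then show "c = c'"
      unfolding color_product_def
      using edge_coloring_color_unique[OF col1] edge_coloring_color_class_matching(1)[OF col2]
      by blast
  next
    fix y w y' w' c c'
    assume c: "(y, w, c) \<in> color_product C1 C2" "(y', w', c) \<in> color_product C1 C2"
      and ne: "(y, w) \<noteq> (y', w')"
    obtain x u x' u' s v where w: "w = (x, u)" "w' = (x', u')" "c = (s, v)"
      and mem: "(x, y, s) \<in> C1" "(u, v, s) \<in> C2" "(x', y', s) \<in> C1" "(u', v, s) \<in> C2"
      using c unfolding color_product_def by auto
    have "u = u'"
      using edge_coloring_color_class_matching(2)[OF col2 mem(2,4)] .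
    with ne w have "(x, y) \<noteq> (x', y')" by auto
    with strong1 mem have "x \<noteq> x' \<and> y \<noteq> y' \<and> (x, y') \<notin> E1 \<and> (x', y) \<notin> E1"
      unfolding strong_edge_coloring_def by blast
    then show "y \<noteq> y' \<and> w \<noteq> w' \<and> (y, w', c') \<notin> color_product C1 C2 \<and> (y', w, c') \<notin> color_product C1 C2"
      using w in_E1 unfolding color_product_def by auto
  qed
qed

theorem lemma3p1:
  fixes V1 :: "'a set" and W1 :: "'b set" and E1 :: "('a \<times> 'b) set"
    and V2 :: "'d set" and W2 :: "'e set" and E2 :: "('d \<times> 'e) set"
    and S :: "'c set" and C1 :: "('a \<times> 'b \<times> 'c) set" and C2 :: "('d \<times> 'e \<times> 'c) set"
  assumes "bipartite V1 W1 E1" and "bipartite V2 W2 E2"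
    and "strong_edge_coloring V1 W1 E1 S C1"
    and "strong_edge_coloring V2 W2 E2 S C2"
  defines "V \<equiv> W1"
    and "W \<equiv> {(x, u) \<in> V1 \<times> V2. \<exists>y \<in> W1. \<exists>v \<in> W2. \<exists>s \<in> S. (x, y, s) \<in> C1 \<and> (u, v, s) \<in> C2}"
    and "E \<equiv> {(y, (x, u)) \<in> W1 \<times> {(x, u) \<in> V1 \<times> V2. \<exists>y \<in> W1. \<exists>v \<in> W2. \<exists>s \<in> S. (x, y, s) \<in> C1 \<and> (u, v, s) \<in> C2}.
          \<exists>s \<in> S. \<exists>v \<in> W2. (x, y, s) \<in> C1 \<and> (u, v, s) \<in> C2}"
    and "C \<equiv> {(y, (x, u), (s, v)). (x, y, s) \<in> C1 \<and> (u, v, s) \<in> C2}"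
    and "\<Sigma> \<equiv> {(s, v) \<in> S \<times> W2. \<exists>u \<in> V2. (u, v, s) \<in> C2}"
  shows "bipartite V W E \<and> strong_edge_coloring V W E \<Sigma> C"
proof
  have col1: "edge_coloring V1 W1 E1 S C1" and col2: "edge_coloring V2 W2 E2 S C2"
    using assms(3,4) unfolding strong_edge_coloring_def by blast+
  note mem1 = edge_coloring_mem[OF assms(1) col1] and mem2 = edge_coloring_mem[OF assms(2) col2]
  have C: "C = color_product C1 C2"
    unfolding C_def color_product_def ..
  have "E = edges_of C"
  proof (rule set_eqI)
    fix e :: "'b \<times> 'a \<times> 'd"
    obtain y x u where e: "e = (y, x, u)" by (cases e) auto
    show "e \<in> E \<longleftrightarrow> e \<in> edges_of C"
      unfolding e E_def C edges_of_def color_product_def using mem1 mem2 by fastforce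
  qed
  moreover have "\<Sigma> = colors_of C"
    unfolding \<Sigma>_def C colors_of_def color_product_def
    using mem2 edge_coloring_color_used[OF col1] by fastforce
  ultimately show "strong_edge_coloring V W E \<Sigma> C"
    using strong_edge_coloring_color_product[OF assms(3) col2] C by simp
  show "bipartite V W E"
    unfolding bipartite_def V_def W_def E_def by auto
qed

end
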